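(* Let $x^{(0)}\in\mathbb R^n$, $h_0:=H(x^{(0)})$, $v_i^{(0)}:=a_1x_1^{(0)}+\dots+a_ix_i^{(0)}$ ($v_0^{(0)}:=0$), and let $x^{(m)}:=\mathcal K^m(x^{(0)})$ be the iterates of the map $\tilde x_i=x_i\dfrac{(1-\epsilon H)(1+\epsilon H)}{(1-\epsilon H+2\epsilon v_{i-1})(1-\epsilon H+2\epsilon v_i)}$. If $h_0\neq0$, then, writing $\rho:=\dfrac{1+\epsilon h_0}{1-\epsilon h_0}$, $$x_i^{(m)}=x_i^{(0)}\frac{\rho^m h_0^2}{\big(h_0+v^{(0)}_{i-1}(\rho^m-1)\big)\big(h_0+v^{(0)}_i(\rho^m-1)\big)},\qquad i=1,\dots,n,$$ and if $h_0=0$, $$x_i^{(m)}=x_i^{(0)}\frac{1}{\big(1+2m\epsilon v^{(0)}_{i-1}\big)\big(1+2m\epsilon v^{(0)}_i\big)},\qquad i=1,\dots,n.$$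
   Context: $(a_1,\dots,a_n)\in\mathbb R^n\setminus\{0\}$, $\epsilon>0$ small, $H=a_1x_1+\dots+a_nx_n$, $v_0:=0$, $v_i:=a_1x_1+\dots+a_ix_i$. (Formulas hold whenever the iterates are defined.) *)

theory Defs
  imports Complex_Main
begin

text \<open>Vectors of R^n are represented as functions nat => real, with the
  components x 1, ..., x n (other arguments are irrelevant).\<close>

definition Hf :: "nat \<Rightarrow> (nat \<Rightarrow> real) \<Rightarrow> (nat \<Rightarrow> real) \<Rightarrow> real" where
  "Hf n a x = (\<Sum>j=1..n. a j * x j)"

definition vp :: "(nat \<Rightarrow> real) \<Rightarrow> (nat \<Rightarrow> real) \<Rightarrow> nat \<Rightarrow> real" where
  "vp a x i = (\<Sum>j=1..i. a j * x j)"

definition Kmap :: "nat \<Rightarrow> (nat \<Rightarrow> real) \<Rightarrow> real \<Rightarrow> (nat \<Rightarrow> real) \<Rightarrow> (nat \<Rightarrow> real)" where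
  "Kmap n a \<epsilon> x = (\<lambda>i. if 1 \<le> i \<and> i \<le> n then
      x i * ((1 - \<epsilon> * Hf n a x) * (1 + \<epsilon> * Hf n a x)) /
        ((1 - \<epsilon> * Hf n a x + 2 * \<epsilon> * vp a x (i - 1)) *
         (1 - \<epsilon> * Hf n a x + 2 * \<epsilon> * vp a x i))
    else x i)"

definition iterates_defined :: "nat \<Rightarrow> (nat \<Rightarrow> real) \<Rightarrow> real \<Rightarrow> (nat \<Rightarrow> real) \<Rightarrow> nat \<Rightarrow> bool" where
  "iterates_defined n a \<epsilon> x m \<longleftrightarrow>
     (\<forall>k<m. \<forall>i\<in>{1..n}.
        let y = (Kmap n a \<epsilon> ^^ k) x in
        1 - \<epsilon> * Hf n a y + 2 * \<epsilon> * vp a y (i - 1) \<noteq> 0 \<and>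
        1 - \<epsilon> * Hf n a y + 2 * \<epsilon> * vp a y i \<noteq> 0)"

end

theory Submission
  imports Defs
begin

(* Along the orbit the map acts on every partial sum v = v_j by the Moebius
   transformation v -> rho v / (1 + c v), with rho = (1 + eps h) / (1 - eps h),
   c = 2 eps / (1 - eps h) and h = H conserved (h = v_n is a fixed point). Its k-th
   iterate is v -> rho^k v / D_k(v), D_k(v) = 1 + c v (1 + rho + ... + rho^(k-1)).
   One step multiplies x_i by rho / ((1 + c v_(i-1)) (1 + c v_i)), and since
   1 + c (rho^k v / D_k(v)) = D_(k+1)(v) / D_k(v) these factors telescope along the orbit.
   Finally h c (1 + rho + ... + rho^(m-1)) = rho^m - 1. *)

lemma vp_0 [simp]: "vp a x 0 = 0"
  by (simp add: vp_def)

lemma vp_Suc: "vp a x (Suc j) = vp a x j + a (Suc j) * x (Suc j)"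
  by (simp add: vp_def)

lemma Hf_eq_vp: "Hf n a x = vp a x n"
  by (simp add: Hf_def vp_def)

lemma quotient_telescoping_step:
  fixes p r \<epsilon> v w :: real
  defines "A \<equiv> p + 2 * \<epsilon> * v" and "B \<equiv> p + 2 * \<epsilon> * w"
  assumes nz: "A \<noteq> 0" "B \<noteq> 0"
  shows "v * r / A + (w - v) * (p * r) / (A * B) = w * r / B"
proof -
  have "v * r / A + (w - v) * (p * r) / (A * B) = r * (v * B + (w - v) * p) / (A * B)"
    using nz by (simp add: field_simps)
  also have "v * B + (w - v) * p = w * A"
    unfolding A_def B_def by (simp add: algebra_simps)
  finally show ?thesis
    using nz by simp
qed

lemma vp_Kmap:
  assumes nz: "\<And>j. j \<le> n \<Longrightarrow> 1 - \<epsilon> * Hf n a x + 2 * \<epsilon> * vp a x j \<noteq> 0"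
    and "j \<le> n"
  shows "vp a (Kmap n a \<epsilon> x) j =
         vp a x j * (1 + \<epsilon> * Hf n a x) / (1 - \<epsilon> * Hf n a x + 2 * \<epsilon> * vp a x j)"
  using \<open>j \<le> n\<close>
proof (induction j)
  case 0
  then show ?case by simp
next
  case (Suc j)
  have "a (Suc j) * Kmap n a \<epsilon> x (Suc j) =
        (vp a x (Suc j) - vp a x j) * ((1 - \<epsilon> * Hf n a x) * (1 + \<epsilon> * Hf n a x)) /
        ((1 - \<epsilon> * Hf n a x + 2 * \<epsilon> * vp a x j) * (1 - \<epsilon> * Hf n a x + 2 * \<epsilon> * vp a x (Suc j)))"
    using Suc.prems by (simp add: Kmap_def vp_Suc)
  then show ?case
    using Suc quotient_telescoping_step[OF nz nz] by (simp add: vp_Suc[of a "Kmap n a \<epsilon> x"])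
qed

lemma Hf_Kmap:
  assumes "\<And>j. j \<le> n \<Longrightarrow> 1 - \<epsilon> * Hf n a x + 2 * \<epsilon> * vp a x j \<noteq> 0"
  shows "Hf n a (Kmap n a \<epsilon> x) = Hf n a x"
proof -
  have "1 + \<epsilon> * Hf n a x \<noteq> 0"
    using assms[of n] by (simp add: Hf_eq_vp)
  then show ?thesis
    using vp_Kmap[OF assms, of n] by (simp add: Hf_eq_vp add.commute)
qed

lemma iterates_defined_denominators:
  assumes "iterates_defined n a \<epsilon> x m" "k < m" "1 \<le> n" "j \<le> n"
  shows "1 - \<epsilon> * Hf n a ((Kmap n a \<epsilon> ^^ k) x) + 2 * \<epsilon> * vp a ((Kmap n a \<epsilon> ^^ k) x) j \<noteq> 0"
proof (cases "j = 0")
  case True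
  then show ?thesis
    using assms unfolding iterates_defined_def Let_def by (metis atLeastAtMost_iff diff_self_eq_0 order_refl)
next
  case False
  then show ?thesis
    using assms unfolding iterates_defined_def Let_def by (metis atLeastAtMost_iff less_one not_less)
qed

definition orbit_ratio :: "real \<Rightarrow> real \<Rightarrow> real" where
  "orbit_ratio \<epsilon> h = (1 + \<epsilon> * h) / (1 - \<epsilon> * h)"

definition orbit_denom :: "real \<Rightarrow> real \<Rightarrow> nat \<Rightarrow> real \<Rightarrow> real" where
  "orbit_denom \<epsilon> h k v = 1 + v * (2 * \<epsilon> / (1 - \<epsilon> * h) * (\<Sum>l<k. orbit_ratio \<epsilon> h ^ l))"

lemma orbit_denom_0 [simp]: "orbit_denom \<epsilon> h 0 v = 1"
  by (simp add: orbit_denom_def)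

lemma orbit_denom_Suc:
  "orbit_denom \<epsilon> h (Suc k) v = orbit_denom \<epsilon> h k v + 2 * \<epsilon> * orbit_ratio \<epsilon> h ^ k * v / (1 - \<epsilon> * h)"
  by (simp add: orbit_denom_def algebra_simps)

lemma orbit_denom_step:
  assumes "1 - \<epsilon> * h \<noteq> 0" "orbit_denom \<epsilon> h k v \<noteq> 0"
  shows "1 - \<epsilon> * h + 2 * \<epsilon> * (orbit_ratio \<epsilon> h ^ k * v / orbit_denom \<epsilon> h k v) =
         (1 - \<epsilon> * h) * orbit_denom \<epsilon> h (Suc k) v / orbit_denom \<epsilon> h k v"
  using assms by (simp add: orbit_denom_Suc field_simps)

lemma orbit_denom_closed_form:
  assumes "1 - \<epsilon> * h \<noteq> 0 \<or> k = 0"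
  shows "h * orbit_denom \<epsilon> h k v = h + v * (orbit_ratio \<epsilon> h ^ k - 1)"
proof (cases "k = 0")
  case False
  then have "1 - \<epsilon> * h \<noteq> 0"
    using assms by simp
  then have "h * (2 * \<epsilon> / (1 - \<epsilon> * h)) = orbit_ratio \<epsilon> h - 1"
    by (simp add: orbit_ratio_def field_simps)
  moreover have "h * orbit_denom \<epsilon> h k v =
      h + v * (h * (2 * \<epsilon> / (1 - \<epsilon> * h)) * (\<Sum>l<k. orbit_ratio \<epsilon> h ^ l))"
    unfolding orbit_denom_def by (simp only: algebra_simps)
  ultimately show ?thesis
    by (simp add: power_diff_1_eq)
qed simp

lemma orbit_denom_h_zero: "orbit_denom \<epsilon> 0 k v = 1 + 2 * real k * \<epsilon> * v"
  by (simp add: orbit_denom_def orbit_ratio_def)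

lemma Kmap_iterates_partial_sums:
  assumes defd: "iterates_defined n a \<epsilon> x m" and n: "1 \<le> n" and "k \<le> m"
  defines "h \<equiv> Hf n a x"
  shows "Hf n a ((Kmap n a \<epsilon> ^^ k) x) = h \<and>
    (\<forall>j\<le>n. orbit_denom \<epsilon> h k (vp a x j) \<noteq> 0 \<and>
       vp a ((Kmap n a \<epsilon> ^^ k) x) j = orbit_ratio \<epsilon> h ^ k * vp a x j / orbit_denom \<epsilon> h k (vp a x j))"
  using \<open>k \<le> m\<close>
proof (induction k)
  case 0
  then show ?case by (simp add: h_def)
next
  case (Suc k)
  define y where "y = (Kmap n a \<epsilon> ^^ k) x"
  define D where "D = (\<lambda>k j. orbit_denom \<epsilon> h k (vp a x j))"
  from Suc have H: "Hf n a y = h"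
    and D: "\<And>j. j \<le> n \<Longrightarrow> D k j \<noteq> 0"
    and v: "\<And>j. j \<le> n \<Longrightarrow> vp a y j = orbit_ratio \<epsilon> h ^ k * vp a x j / D k j"
    by (auto simp: y_def D_def)
  have u: "1 - \<epsilon> * Hf n a y + 2 * \<epsilon> * vp a y j \<noteq> 0" if "j \<le> n" for j
    using iterates_defined_denominators[OF defd _ n that] Suc.prems by (simp add: y_def)
  have p: "1 - \<epsilon> * h \<noteq> 0"
    using u[of 0] by (simp add: H)
  have u_eq: "1 - \<epsilon> * h + 2 * \<epsilon> * vp a y j = (1 - \<epsilon> * h) * D (Suc k) j / D k j" if "j \<le> n" for j
    unfolding v[OF that] D_def using orbit_denom_step[OF p D[OF that, unfolded D_def]] .
  have D': "D (Suc k) j \<noteq> 0" if "j \<le> n" for j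
    using u[OF that] u_eq[OF that] by (auto simp: H)
  have "vp a (Kmap n a \<epsilon> y) j = orbit_ratio \<epsilon> h ^ Suc k * vp a x j / D (Suc k) j" if "j \<le> n" for j
  proof -
    have "vp a (Kmap n a \<epsilon> y) j = vp a y j * (1 + \<epsilon> * h) / ((1 - \<epsilon> * h) * D (Suc k) j / D k j)"
      using vp_Kmap[OF u that] u_eq[OF that] by (simp add: H)
    also have "\<dots> = orbit_ratio \<epsilon> h ^ k * ((1 + \<epsilon> * h) / (1 - \<epsilon> * h)) * vp a x j / D (Suc k) j"
      using v[OF that] D[OF that] D'[OF that] p by (simp add: field_simps)
    finally show ?thesis
      by (simp add: orbit_ratio_def)
  qed
  moreover have "(Kmap n a \<epsilon> ^^ Suc k) x = Kmap n a \<epsilon> y"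
    by (simp add: y_def)
  ultimately show ?case
    using Hf_Kmap[OF u] H D' by (simp add: D_def)
qed

lemma Kmap_iterates:
  assumes defd: "iterates_defined n a \<epsilon> x m" and n: "1 \<le> n" and "k \<le> m"
    and i: "1 \<le> i" "i \<le> n"
  defines "h \<equiv> Hf n a x"
  shows "(Kmap n a \<epsilon> ^^ k) x i =
    x i * orbit_ratio \<epsilon> h ^ k / (orbit_denom \<epsilon> h k (vp a x (i - 1)) * orbit_denom \<epsilon> h k (vp a x i))"
  using \<open>k \<le> m\<close>
proof (induction k)
  case 0
  then show ?case by simp
next
  case (Suc k)
  define y where "y = (Kmap n a \<epsilon> ^^ k) x"
  define D where "D = (\<lambda>k j. orbit_denom \<epsilon> h k (vp a x j))"
  from Kmap_iterates_partial_sums[OF defd n, of k] Kmap_iterates_partial_sums[OF defd n, of "Suc k"] Suc.prems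
  have H: "Hf n a y = h"
    and D: "\<And>j. j \<le> n \<Longrightarrow> D k j \<noteq> 0 \<and> D (Suc k) j \<noteq> 0"
    and v: "\<And>j. j \<le> n \<Longrightarrow> vp a y j = orbit_ratio \<epsilon> h ^ k * vp a x j / D k j"
    by (auto simp: y_def D_def h_def)
  define p q where "p = 1 - \<epsilon> * h" and "q = 1 + \<epsilon> * h"
  have u: "p + 2 * \<epsilon> * vp a y j \<noteq> 0" if "j \<le> n" for j
    using iterates_defined_denominators[OF defd _ n that, of k] Suc.prems H by (simp add: y_def p_def)
  have p_nz: "p \<noteq> 0"
    using u[of 0] by simp
  have u_eq: "p + 2 * \<epsilon> * vp a y j = p * D (Suc k) j / D k j" if "j \<le> n" for j
    unfolding v[OF that] D_def p_def using orbit_denom_step[OF p_nz[unfolded p_def]] D[OF that]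
    by (simp add: D_def)
  have "y i = x i * orbit_ratio \<epsilon> h ^ k / (D k (i - 1) * D k i)"
    using Suc by (simp add: y_def D_def)
  moreover have "(Kmap n a \<epsilon> ^^ Suc k) x i =
      y i * (p * q) / (p * D (Suc k) (i - 1) / D k (i - 1) * (p * D (Suc k) i / D k i))"
    using i u_eq[of i] u_eq[of "i - 1"] by (simp add: y_def[symmetric] Kmap_def H p_def q_def)
  ultimately have "(Kmap n a \<epsilon> ^^ Suc k) x i =
      x i * orbit_ratio \<epsilon> h ^ k * (q / p) / (D (Suc k) (i - 1) * D (Suc k) i)"
    using D[of i] D[of "i - 1"] i p_nz by (simp add: field_simps)
  then show ?case
    by (simp add: D_def orbit_ratio_def p_def q_def)
qed

theorem proposition3p4:
  fixes n :: nat and a x0 :: "nat \<Rightarrow> real" and \<epsilon> :: real and m i :: nat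
  assumes a_nz: "\<exists>j\<in>{1..n}. a j \<noteq> 0"
    and eps_pos: "\<epsilon> > 0"
    and defined: "iterates_defined n a \<epsilon> x0 m"
    and i_range: "1 \<le> i" "i \<le> n"
  shows "(Hf n a x0 \<noteq> 0 \<longrightarrow>
           (let h0 = Hf n a x0; \<rho> = (1 + \<epsilon> * h0) / (1 - \<epsilon> * h0) in
            ((Kmap n a \<epsilon> ^^ m) x0) i =
              x0 i * (\<rho> ^ m * h0 ^ 2) /
                ((h0 + vp a x0 (i - 1) * (\<rho> ^ m - 1)) * (h0 + vp a x0 i * (\<rho> ^ m - 1)))))
       \<and> (Hf n a x0 = 0 \<longrightarrow>
           ((Kmap n a \<epsilon> ^^ m) x0) i =
              x0 i * (1 / ((1 + 2 * real m * \<epsilon> * vp a x0 (i - 1)) *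
                           (1 + 2 * real m * \<epsilon> * vp a x0 i))))"
proof -
  have n: "1 \<le> n"
    using i_range by simp
  define h where "h = Hf n a x0"
  define D where "D = (\<lambda>j. orbit_denom \<epsilon> h m (vp a x0 j))"
  have orbit: "(Kmap n a \<epsilon> ^^ m) x0 i = x0 i * orbit_ratio \<epsilon> h ^ m / (D (i - 1) * D i)"
    using Kmap_iterates[OF defined n order_refl i_range] by (simp add: h_def D_def)
  have "1 - \<epsilon> * h \<noteq> 0 \<or> m = 0"
    using iterates_defined_denominators[OF defined _ n, of 0 0] by (auto simp: h_def)
  then have closed: "h + vp a x0 j * (orbit_ratio \<epsilon> h ^ m - 1) = h * D j" for j
    unfolding D_def by (rule orbit_denom_closed_form[symmetric])
  have neutral: "D j = 1 + 2 * real m * \<epsilon> * vp a x0 j" if "h = 0" for j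
    using that by (simp add: D_def orbit_denom_h_zero)
  show ?thesis
    using orbit unfolding h_def[symmetric] orbit_ratio_def[symmetric]
    by (auto simp: Let_def closed neutral power2_eq_square orbit_ratio_def[of \<epsilon> 0])
qed

end
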